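(* Let $N, M_1, M_2, P, R_1, R_2, R_3, \widetilde{M}_2, \widetilde{P}$ be positive integers with $\widetilde{M}_2 \le M_2$, $\widetilde{P}\le P$. Let $\mathbf{y}\in\mathbb{C}^N$, $\mathbf{H}\in\mathbb{C}^{N\times M_1}$ and $\mathcal{M}\in\mathbb{R}^{N\times M_2\times P}$ be as in the context. Let $\mathbf{U}_2\in\mathbb{R}^{M_2\times\widetilde{M}_2}$ and $\mathbf{U}_3\in\mathbb{R}^{P\times\widetilde{P}}$ have orthonormal columns, and set $\widetilde{\mathcal{M}}=\mathcal{M}\times_2\mathbf{U}_2^\top\times_3\mathbf{U}_3^\top$ and $\widehat{\mathcal{M}}=\mathcal{M}\times_2\mathbf{U}_2\mathbf{U}_2^\top\times_3\mathbf{U}_3\mathbf{U}_3^\top$. Suppose $(\mathcal{G}^\star,\mathbf{A}^\star,\mathbf{B}^\star,\mathbf{C}^\star)$, with $\mathcal{G}^\star\in\mathbb{C}^{R_1\times R_2\times R_3}$, $\mathbf{A}^\star\in\mathbb{C}^{M_1\times R_1}$, $\mathbf{B}^\star\in\mathbb{C}^{M_2\times R_2}$, $\mathbf{C}^\star\in\mathbb{C}^{P\times R_3}$, attains $$m_{\mathrm{Tu}}:=\min_{\mathcal{G},\mathbf{A},\mathbf{B},\mathbf{C}}\Big\|\mathbf{y}-\sum_{r_1=1}^{R_1}\sum_{r_2=1}^{R_2}\sum_{r_3=1}^{R_3}\mathcal{G}_{r_1r_2r_3}\, \mathbf{H}\mathbf{A}_{:r_1}\odot\big(\mathcal{M}\times_2\mathbf{B}_{:r_2}\times_3\mathbf{C}_{:r_3}\big)\Big\|_F$$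 over $\mathcal{G}\in\mathbb{C}^{R_1\times R_2\times R_3},\mathbf{A}\in\mathbb{C}^{M_1\times R_1},\mathbf{B}\in\mathbb{C}^{M_2\times R_2},\mathbf{C}\in\mathbb{C}^{P\times R_3}$. Then $$\inf_{\substack{\mathcal{G},\ \mathbf{A}\\ \widetilde{\mathbf{B}}\in\mathbb{C}^{\widetilde{M}_2\times R_2}\\ \widetilde{\mathbf{C}}\in\mathbb{C}^{\widetilde{P}\times R_3}}}\Big\|\mathbf{y}-\sum_{r_1,r_2,r_3}\mathcal{G}_{r_1r_2r_3}\, \mathbf{H}\mathbf{A}_{:r_1}\odot\big(\widetilde{\mathcal{M}}\times_2\widetilde{\mathbf{B}}_{:r_2}\times_3\widetilde{\mathbf{C}}_{:r_3}\big)\Big\|_F \le m_{\mathrm{Tu}}+\|\mathcal{M}-\widehat{\mathcal{M}}\|_F\sum_{r_1,r_2,r_3}|\mathcal{G}^\star_{r_1r_2r_3}|\,\|\mathbf{H}\mathbf{A}^\star_{:r_1}\|_\infty\|\mathbf{B}^\star_{:r_2}\|_F\|\mathbf{C}^\star_{:r_3}\|_F,$$ where $\mathcal{G}$ ranges over $\mathbb{C}^{R_1\times R_2\times R_3}$, $\mathbf{A}$ over $\mathbb{C}^{M_1\times R_1}$, and the sums are over $1\le r_k\le R_k$.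
   Context: Let $x(t)$, $t\in\mathbb{Z}$, be a complex-valued input signal and $y(t)$ a complex-valued output signal, $t_0\in\mathbb{Z}$. Define $\mathbf{y}=(y(t_0),\dots,y(t_0+N-1))^\top\in\mathbb{C}^N$; $\mathbf{H}\in\mathbb{C}^{N\times M_1}$ with entries $h_{ni}=x(t_0+n-i)$ ($n=0,\dots,N-1$, $i=0,\dots,M_1-1$); and $\mathcal{M}\in\mathbb{R}^{N\times M_2\times P}$ with entries $\mathcal{M}_{njp}=|x(t_0+n-j)|^p$ ($j=0,\dots,M_2-1$, $p=0,\dots,P-1$, with $0^0=1$). Mode-$k$ product of a tensor $\mathcal{X}\in\mathbb{C}^{I_1\times I_2\times I_3}$ with a matrix $\mathbf{Q}\in\mathbb{C}^{n\times I_k}$: replace mode $k$ by $n$ with $(\mathcal{X}\times_k\mathbf{Q})_{\dots j\dots}=\sum_{i_k}\mathcal{X}_{\dots i_k\dots}q_{j i_k}$ (no conjugation). Mode-$k$ product with a vector $\mathbf{v}\in\mathbb{C}^{I_k}$ contracts mode $k$: $(\mathcal{X}\times_k\mathbf{v})=\sum_{i_k}\mathcal{X}_{\dots i_k\dots}v_{i_k}$, removing that mode; in particular $(\mathcal{M}\times_2\mathbf{b}\times_3\mathbf{c})_n=\sum_{j,p}\mathcal{M}_{njp}b_jc_p$. $\mathbf{A}_{:r}$ denotes the $r$-th column of $\mathbf{A}$; $\odot$ is the entrywise (Hadamard) product; $\|\cdot\|_F$ is the Frobenius (Euclidean for vectors) norm; $\|\cdot\|_\infty$ is the maximum modulus of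 the entries of a vector. *)

theory Defs
  imports Complex_Main
begin

text \<open>Vectors, matrices and 3-way tensors are represented by functions on nat
  indices; only entries with indices below the stated dimensions are ever used.\<close>

definition yvec :: "(int \<Rightarrow> complex) \<Rightarrow> int \<Rightarrow> nat \<Rightarrow> complex" where
  "yvec y t0 n = y (t0 + int n)"

definition Hmat :: "(int \<Rightarrow> complex) \<Rightarrow> int \<Rightarrow> nat \<Rightarrow> nat \<Rightarrow> complex" where
  "Hmat x t0 n i = x (t0 + int n - int i)"

definition Mten :: "(int \<Rightarrow> complex) \<Rightarrow> int \<Rightarrow> nat \<Rightarrow> nat \<Rightarrow> nat \<Rightarrow> real" where
  "Mten x t0 n j p = cmod (x (t0 + int n - int j)) ^ p"

definition compress ::
  "(nat \<Rightarrow> nat \<Rightarrow> nat \<Rightarrow> real) \<Rightarrow> nat \<Rightarrow> nat \<Rightarrow> (nat \<Rightarrow> nat \<Rightarrow> real) \<Rightarrow> (nat \<Rightarrow> nat \<Rightarrow> real)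
   \<Rightarrow> nat \<Rightarrow> nat \<Rightarrow> nat \<Rightarrow> real" where
  "compress T M2 P U2 U3 n j p =
     (\<Sum>j'<M2. \<Sum>p'<P. T n j' p' * U2 j' j * U3 p' p)"

definition project ::
  "(nat \<Rightarrow> nat \<Rightarrow> nat \<Rightarrow> real) \<Rightarrow> nat \<Rightarrow> nat \<Rightarrow> nat \<Rightarrow> nat \<Rightarrow> (nat \<Rightarrow> nat \<Rightarrow> real) \<Rightarrow> (nat \<Rightarrow> nat \<Rightarrow> real)
   \<Rightarrow> nat \<Rightarrow> nat \<Rightarrow> nat \<Rightarrow> real" where
  "project T M2 P M2t Pt U2 U3 n j p =
     (\<Sum>j'<M2. \<Sum>p'<P. T n j' p' * (\<Sum>k<M2t. U2 j k * U2 j' k) * (\<Sum>k<Pt. U3 p k * U3 p' k))"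

definition orthonormal_cols :: "nat \<Rightarrow> nat \<Rightarrow> (nat \<Rightarrow> nat \<Rightarrow> real) \<Rightarrow> bool" where
  "orthonormal_cols m k U \<longleftrightarrow>
     (\<forall>a<k. \<forall>b<k. (\<Sum>i<m. U i a * U i b) = (if a = b then 1 else 0))"

definition HA :: "(nat \<Rightarrow> nat \<Rightarrow> complex) \<Rightarrow> nat \<Rightarrow> (nat \<Rightarrow> nat \<Rightarrow> complex) \<Rightarrow> nat \<Rightarrow> nat \<Rightarrow> complex" where
  "HA H M1 A r n = (\<Sum>i<M1. H n i * A i r)"

definition contr23 :: "(nat \<Rightarrow> nat \<Rightarrow> nat \<Rightarrow> real) \<Rightarrow> nat \<Rightarrow> nat \<Rightarrow> (nat \<Rightarrow> complex) \<Rightarrow> (nat \<Rightarrow> complex)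
   \<Rightarrow> nat \<Rightarrow> complex" where
  "contr23 T M2 P b c n = (\<Sum>j<M2. \<Sum>p<P. of_real (T n j p) * b j * c p)"

definition residual ::
  "nat \<Rightarrow> (nat \<Rightarrow> complex) \<Rightarrow> (nat \<Rightarrow> nat \<Rightarrow> complex) \<Rightarrow> nat \<Rightarrow> (nat \<Rightarrow> nat \<Rightarrow> nat \<Rightarrow> real)
   \<Rightarrow> nat \<Rightarrow> nat \<Rightarrow> nat \<Rightarrow> nat \<Rightarrow> nat
   \<Rightarrow> (nat \<Rightarrow> nat \<Rightarrow> nat \<Rightarrow> complex) \<Rightarrow> (nat \<Rightarrow> nat \<Rightarrow> complex) \<Rightarrow> (nat \<Rightarrow> nat \<Rightarrow> complex)
   \<Rightarrow> (nat \<Rightarrow> nat \<Rightarrow> complex) \<Rightarrow> real" where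
  "residual N y H M1 T M2 P R1 R2 R3 G A B C =
     sqrt (\<Sum>n<N. (cmod (y n - (\<Sum>r1<R1. \<Sum>r2<R2. \<Sum>r3<R3.
        G r1 r2 r3 * HA H M1 A r1 n * contr23 T M2 P (\<lambda>j. B j r2) (\<lambda>p. C p r3) n)))\<^sup>2)"

definition frob3 :: "nat \<Rightarrow> nat \<Rightarrow> nat \<Rightarrow> (nat \<Rightarrow> nat \<Rightarrow> nat \<Rightarrow> real) \<Rightarrow> real" where
  "frob3 N M2 P T = sqrt (\<Sum>n<N. \<Sum>j<M2. \<Sum>p<P. (T n j p)\<^sup>2)"

definition colnorm :: "nat \<Rightarrow> (nat \<Rightarrow> nat \<Rightarrow> complex) \<Rightarrow> nat \<Rightarrow> real" where
  "colnorm m B r = sqrt (\<Sum>i<m. (cmod (B i r))\<^sup>2)"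

definition supnorm :: "nat \<Rightarrow> (nat \<Rightarrow> complex) \<Rightarrow> real" where
  "supnorm N v = Max ((\<lambda>n. cmod (v n)) ` {..<N})"

end

theory Submission imports Defs "HOL-Analysis.L2_Norm" begin

text \<open>Compress the starred factors to \<open>U2\<^sup>T B\<close> and \<open>U3\<^sup>T C\<close>. By associativity of
  mode products, contracting \<open>M \<times>\<^sub>2 U2\<^sup>T \<times>\<^sub>3 U3\<^sup>T\<close> with \<open>U2\<^sup>T b\<close> and \<open>U3\<^sup>T c\<close> is the same as
  contracting the projected tensor \<open>M' = M \<times>\<^sub>2 U2 U2\<^sup>T \<times>\<^sub>3 U3 U3\<^sup>T\<close> with \<open>b\<close> and \<open>c\<close>, so the
  compressed residual at this point is the residual of the model built on \<open>M'\<close>. The model is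
  linear in the tensor, so the two residuals differ by at most the norm of the model built on
  \<open>M - M'\<close>; each of its summands is bounded by the sup norm of \<open>H A\<^sub>:\<^sub>r\<^sub>1\<close> times, by
  Cauchy-Schwarz, \<open>\<parallel>M - M'\<parallel>\<^sub>F \<parallel>B\<^sub>:\<^sub>r\<^sub>2\<parallel> \<parallel>C\<^sub>:\<^sub>r\<^sub>3\<parallel>\<close>.\<close>

definition tucker_model ::
  "(nat \<Rightarrow> nat \<Rightarrow> complex) \<Rightarrow> nat \<Rightarrow> (nat \<Rightarrow> nat \<Rightarrow> nat \<Rightarrow> real) \<Rightarrow> nat \<Rightarrow> nat
   \<Rightarrow> nat \<Rightarrow> nat \<Rightarrow> nat \<Rightarrow> (nat \<Rightarrow> nat \<Rightarrow> nat \<Rightarrow> complex) \<Rightarrow> (nat \<Rightarrow> nat \<Rightarrow> complex)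
   \<Rightarrow> (nat \<Rightarrow> nat \<Rightarrow> complex) \<Rightarrow> (nat \<Rightarrow> nat \<Rightarrow> complex) \<Rightarrow> nat \<Rightarrow> complex" where
  "tucker_model H M1 T M2 P R1 R2 R3 G A B C n =
     (\<Sum>r1<R1. \<Sum>r2<R2. \<Sum>r3<R3. G r1 r2 r3 * HA H M1 A r1 n * contr23 T M2 P (\<lambda>j. B j r2) (\<lambda>p. C p r3) n)"

lemma residual_eq_L2_set:
  "residual N y H M1 T M2 P R1 R2 R3 G A B C
     = L2_set (\<lambda>n. cmod (y n - tucker_model H M1 T M2 P R1 R2 R3 G A B C n)) {..<N}"
  unfolding residual_def tucker_model_def L2_set_def by simp

lemma residual_nonneg: "0 \<le> residual N y H M1 T M2 P R1 R2 R3 G A B C"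
  unfolding residual_def by (simp add: sum_nonneg)

lemma contr23_mode_products:
  fixes T :: "nat \<Rightarrow> nat \<Rightarrow> nat \<Rightarrow> real" and V W :: "nat \<Rightarrow> nat \<Rightarrow> real"
  shows "contr23 (\<lambda>n j p. \<Sum>j'<M2. \<Sum>p'<P. T n j' p' * V j' j * W p' p) m q b c n
    = contr23 T M2 P (\<lambda>j'. \<Sum>j<m. of_real (V j' j) * b j) (\<lambda>p'. \<Sum>p<q. of_real (W p' p) * c p) n"
proof -
  let ?f = "\<lambda>j p j' p'. of_real (T n j' p') * (of_real (V j' j) * b j) * (of_real (W p' p) * c p)"
  have "contr23 (\<lambda>n j p. \<Sum>j'<M2. \<Sum>p'<P. T n j' p' * V j' j * W p' p) m q b c n
      = (\<Sum>j<m. \<Sum>p<q. \<Sum>j'<M2. \<Sum>p'<P. ?f j p j' p')"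
    unfolding contr23_def by (simp add: of_real_sum sum_distrib_left sum_distrib_right mult_ac)
  also have "\<dots> = (\<Sum>j<m. \<Sum>j'<M2. \<Sum>p<q. \<Sum>p'<P. ?f j p j' p')"
    by (intro sum.cong refl sum.swap)
  also have "\<dots> = (\<Sum>j'<M2. \<Sum>j<m. \<Sum>p'<P. \<Sum>p<q. ?f j p j' p')"
    by (subst sum.swap) (intro sum.cong refl sum.swap)
  also have "\<dots> = (\<Sum>j'<M2. \<Sum>p'<P. \<Sum>j<m. \<Sum>p<q. ?f j p j' p')"
    by (intro sum.cong refl sum.swap)
  also have "\<dots> = contr23 T M2 P (\<lambda>j'. \<Sum>j<m. of_real (V j' j) * b j) (\<lambda>p'. \<Sum>p<q. of_real (W p' p) * c p) n"
    unfolding contr23_def by (simp add: sum_distrib_left sum_distrib_right mult_ac)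
  finally show ?thesis .
qed

lemma mult_transpose_mult_assoc:
  fixes U :: "nat \<Rightarrow> nat \<Rightarrow> real" and b :: "nat \<Rightarrow> complex"
  shows "(\<Sum>k<mt. of_real (U j k) * (\<Sum>a<m. of_real (U a k) * b a))
    = (\<Sum>a<m. of_real (\<Sum>k<mt. U a k * U j k) * b a)"
  by (simp add: of_real_sum sum_distrib_left sum_distrib_right mult_ac sum.swap[of _ "{..<mt}"])

lemma contr23_compress_eq_project:
  "contr23 (compress T M2 P U2 U3) M2t Pt
      (\<lambda>k. \<Sum>a<M2. of_real (U2 a k) * b a) (\<lambda>l. \<Sum>a<P. of_real (U3 a l) * c a) n
    = contr23 (project T M2 P M2t Pt U2 U3) M2 P b c n"
  unfolding compress_def project_def contr23_mode_products mult_transpose_mult_assoc ..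

lemma contr23_diff:
  "contr23 T M2 P b c n - contr23 T' M2 P b c n = contr23 (\<lambda>n j p. T n j p - T' n j p) M2 P b c n"
  unfolding contr23_def by (simp add: sum_subtractf[symmetric] algebra_simps)

lemma tucker_model_diff:
  "tucker_model H M1 T M2 P R1 R2 R3 G A B C n - tucker_model H M1 T' M2 P R1 R2 R3 G A B C n
    = tucker_model H M1 (\<lambda>n j p. T n j p - T' n j p) M2 P R1 R2 R3 G A B C n"
  unfolding tucker_model_def
  by (simp add: sum_subtractf[symmetric] contr23_diff[symmetric] algebra_simps)

lemma L2_set_norm_sum_le:
  fixes f :: "'i \<Rightarrow> 'a \<Rightarrow> 'b::real_normed_vector"
  assumes "finite I"
  shows "L2_set (\<lambda>n. norm (\<Sum>i\<in>I. f i n)) A \<le> (\<Sum>i\<in>I. L2_set (\<lambda>n. norm (f i n)) A)"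
  using assms
proof (induction I rule: finite_induct)
  case empty
  then show ?case by (simp add: L2_set_def)
next
  case (insert i I)
  have "L2_set (\<lambda>n. norm (\<Sum>i\<in>insert i I. f i n)) A
      \<le> L2_set (\<lambda>n. norm (f i n) + norm (\<Sum>i\<in>I. f i n)) A"
    using insert by (intro L2_set_mono) (auto simp: norm_triangle_ineq)
  also have "\<dots> \<le> L2_set (\<lambda>n. norm (f i n)) A + L2_set (\<lambda>n. norm (\<Sum>i\<in>I. f i n)) A"
    by (rule L2_set_triangle_ineq)
  finally show ?case using insert by simp
qed

lemma norm_bilinear_form_le:
  fixes E :: "nat \<Rightarrow> nat \<Rightarrow> real" and b c :: "nat \<Rightarrow> complex"
  shows "cmod (\<Sum>j<m. \<Sum>p<q. of_real (E j p) * b j * c p)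
     \<le> sqrt (\<Sum>j<m. \<Sum>p<q. (E j p)\<^sup>2) * (sqrt (\<Sum>j<m. (cmod (b j))\<^sup>2) * sqrt (\<Sum>p<q. (cmod (c p))\<^sup>2))"
proof -
  let ?K = "{..<m} \<times> {..<q}"
  have "cmod (\<Sum>j<m. \<Sum>p<q. of_real (E j p) * b j * c p)
      \<le> (\<Sum>j<m. \<Sum>p<q. cmod (of_real (E j p) * b j * c p))"
    by (intro order_trans[OF norm_sum] sum_mono norm_sum)
  also have "\<dots> = (\<Sum>(j,p)\<in>?K. \<bar>E j p\<bar> * \<bar>cmod (b j) * cmod (c p)\<bar>)"
    by (simp add: sum.cartesian_product norm_mult mult.assoc)
  also have "\<dots> \<le> L2_set (\<lambda>(j,p). E j p) ?K * L2_set (\<lambda>(j,p). cmod (b j) * cmod (c p)) ?K"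
    using L2_set_mult_ineq[of "\<lambda>(j,p). E j p" "\<lambda>(j,p). cmod (b j) * cmod (c p)" ?K]
    by (simp add: case_prod_beta)
  also have "L2_set (\<lambda>(j,p). E j p) ?K = sqrt (\<Sum>j<m. \<Sum>p<q. (E j p)\<^sup>2)"
    by (simp add: L2_set_def sum.cartesian_product case_prod_beta)
  also have "L2_set (\<lambda>(j,p). cmod (b j) * cmod (c p)) ?K
      = sqrt ((\<Sum>j<m. (cmod (b j))\<^sup>2) * (\<Sum>p<q. (cmod (c p))\<^sup>2))"
    unfolding L2_set_def sum_product
    by (simp add: sum.cartesian_product power_mult_distrib split_def)
  also have "\<dots> = sqrt (\<Sum>j<m. (cmod (b j))\<^sup>2) * sqrt (\<Sum>p<q. (cmod (c p))\<^sup>2)"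
    by (rule real_sqrt_mult)
  finally show ?thesis .
qed

lemma L2_set_contr23_le:
  "L2_set (\<lambda>n. cmod (contr23 E M2 P (\<lambda>j. B j r2) (\<lambda>p. C p r3) n)) {..<N}
     \<le> frob3 N M2 P E * (colnorm M2 B r2 * colnorm P C r3)"
proof -
  let ?k = "colnorm M2 B r2 * colnorm P C r3"
  have "L2_set (\<lambda>n. cmod (contr23 E M2 P (\<lambda>j. B j r2) (\<lambda>p. C p r3) n)) {..<N}
      \<le> L2_set (\<lambda>n. sqrt (\<Sum>j<M2. \<Sum>p<P. (E n j p)\<^sup>2) * ?k) {..<N}"
    unfolding contr23_def colnorm_def by (intro L2_set_mono norm_bilinear_form_le) auto
  also have "\<dots> = L2_set (\<lambda>n. sqrt (\<Sum>j<M2. \<Sum>p<P. (E n j p)\<^sup>2)) {..<N} * ?k"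
    by (rule L2_set_left_distrib[symmetric]) (simp add: colnorm_def sum_nonneg)
  also have "L2_set (\<lambda>n. sqrt (\<Sum>j<M2. \<Sum>p<P. (E n j p)\<^sup>2)) {..<N} = frob3 N M2 P E"
    unfolding L2_set_def frob3_def by (simp add: sum_nonneg)
  finally show ?thesis .
qed

lemma norm_le_supnorm: "n < N \<Longrightarrow> cmod (v n) \<le> supnorm N v"
  unfolding supnorm_def by (intro Max_ge) auto

lemma L2_set_hadamard_le_supnorm:
  assumes "0 < N"
  shows "L2_set (\<lambda>n. cmod (v n * w n)) {..<N} \<le> supnorm N v * L2_set (\<lambda>n. cmod (w n)) {..<N}"
proof -
  have "0 \<le> supnorm N v"
    using norm_le_supnorm[OF assms] by (meson norm_ge_zero order_trans)
  moreover have "L2_set (\<lambda>n. cmod (v n * w n)) {..<N} \<le> L2_set (\<lambda>n. supnorm N v * cmod (w n)) {..<N}"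
    by (intro L2_set_mono) (auto simp: norm_mult intro!: mult_right_mono norm_le_supnorm)
  ultimately show ?thesis
    by (simp add: L2_set_right_distrib)
qed

lemma L2_set_tucker_model_le:
  assumes "0 < N"
  shows "L2_set (\<lambda>n. cmod (tucker_model H M1 E M2 P R1 R2 R3 G A B C n)) {..<N}
    \<le> frob3 N M2 P E * (\<Sum>r1<R1. \<Sum>r2<R2. \<Sum>r3<R3.
          cmod (G r1 r2 r3) * supnorm N (HA H M1 A r1) * colnorm M2 B r2 * colnorm P C r3)"
proof -
  let ?c = "\<lambda>r2 r3 n. contr23 E M2 P (\<lambda>j. B j r2) (\<lambda>p. C p r3) n"
  have "L2_set (\<lambda>n. cmod (tucker_model H M1 E M2 P R1 R2 R3 G A B C n)) {..<N}
      \<le> (\<Sum>r1<R1. \<Sum>r2<R2. \<Sum>r3<R3. L2_set (\<lambda>n. cmod (G r1 r2 r3 * (HA H M1 A r1 n * ?c r2 r3 n))) {..<N})"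
    unfolding tucker_model_def mult.assoc
    by (intro order_trans[OF L2_set_norm_sum_le] sum_mono L2_set_norm_sum_le) auto
  also have "\<dots> \<le> (\<Sum>r1<R1. \<Sum>r2<R2. \<Sum>r3<R3. cmod (G r1 r2 r3) * (supnorm N (HA H M1 A r1)
                    * (frob3 N M2 P E * (colnorm M2 B r2 * colnorm P C r3))))"
  proof (intro sum_mono)
    fix r1 r2 r3
    have "supnorm N (HA H M1 A r1) * L2_set (\<lambda>n. cmod (?c r2 r3 n)) {..<N}
        \<le> supnorm N (HA H M1 A r1) * (frob3 N M2 P E * (colnorm M2 B r2 * colnorm P C r3))"
      using norm_le_supnorm[OF assms, of "HA H M1 A r1"]
      by (intro mult_left_mono L2_set_contr23_le) (meson norm_ge_zero order_trans)
    moreover have "L2_set (\<lambda>n. cmod (G r1 r2 r3 * (HA H M1 A r1 n * ?c r2 r3 n))) {..<N}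
        = cmod (G r1 r2 r3) * L2_set (\<lambda>n. cmod (HA H M1 A r1 n * ?c r2 r3 n)) {..<N}"
      by (simp add: L2_set_right_distrib norm_mult)
    ultimately show "L2_set (\<lambda>n. cmod (G r1 r2 r3 * (HA H M1 A r1 n * ?c r2 r3 n))) {..<N}
        \<le> cmod (G r1 r2 r3) * (supnorm N (HA H M1 A r1) * (frob3 N M2 P E * (colnorm M2 B r2 * colnorm P C r3)))"
      using L2_set_hadamard_le_supnorm[OF assms, of "HA H M1 A r1" "?c r2 r3"]
      by (simp add: mult_left_mono)
  qed
  also have "\<dots> = frob3 N M2 P E * (\<Sum>r1<R1. \<Sum>r2<R2. \<Sum>r3<R3.
          cmod (G r1 r2 r3) * supnorm N (HA H M1 A r1) * colnorm M2 B r2 * colnorm P C r3)"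
    by (simp add: sum_distrib_left mult_ac)
  finally show ?thesis .
qed

lemma residual_le_residual_add:
  "residual N y H M1 T' M2 P R1 R2 R3 G A B C
    \<le> residual N y H M1 T M2 P R1 R2 R3 G A B C
      + L2_set (\<lambda>n. cmod (tucker_model H M1 (\<lambda>n j p. T n j p - T' n j p) M2 P R1 R2 R3 G A B C n)) {..<N}"
  unfolding residual_eq_L2_set tucker_model_diff[symmetric]
  by (rule order_trans[OF L2_set_mono L2_set_triangle_ineq])
     (simp_all, metis diff_add_cancel diff_diff_eq2 norm_triangle_ineq)

theorem theorem3:
  fixes x y :: "int \<Rightarrow> complex" and t0 :: int
    and N M1 M2 P R1 R2 R3 M2t Pt :: nat
    and U2 U3 :: "nat \<Rightarrow> nat \<Rightarrow> real"
    and Gs :: "nat \<Rightarrow> nat \<Rightarrow> nat \<Rightarrow> complex" and As Bs Cs :: "nat \<Rightarrow> nat \<Rightarrow> complex"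
  assumes pos: "0 < N" "0 < M1" "0 < M2" "0 < P" "0 < R1" "0 < R2" "0 < R3" "0 < M2t" "0 < Pt"
    and dims: "M2t \<le> M2" "Pt \<le> P"
    and U2: "orthonormal_cols M2 M2t U2" and U3: "orthonormal_cols P Pt U3"
    and opt: "\<And>G A B C. residual N (yvec y t0) (Hmat x t0) M1 (Mten x t0) M2 P R1 R2 R3 Gs As Bs Cs
                 \<le> residual N (yvec y t0) (Hmat x t0) M1 (Mten x t0) M2 P R1 R2 R3 G A B C"
  shows "Inf {residual N (yvec y t0) (Hmat x t0) M1 (compress (Mten x t0) M2 P U2 U3) M2t Pt R1 R2 R3 G A Bt Ct
              | G A Bt Ct. True}
    \<le> residual N (yvec y t0) (Hmat x t0) M1 (Mten x t0) M2 P R1 R2 R3 Gs As Bs Cs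
      + frob3 N M2 P (\<lambda>n j p. Mten x t0 n j p - project (Mten x t0) M2 P M2t Pt U2 U3 n j p)
        * (\<Sum>r1<R1. \<Sum>r2<R2. \<Sum>r3<R3. cmod (Gs r1 r2 r3) * supnorm N (HA (Hmat x t0) M1 As r1)
             * colnorm M2 Bs r2 * colnorm P Cs r3)"
proof -
  define T where "T = Mten x t0"
  define Tp where "Tp = project T M2 P M2t Pt U2 U3"
  define Bt where "Bt = (\<lambda>k r. \<Sum>a<M2. of_real (U2 a k) * Bs a r :: complex)"
  define Ct where "Ct = (\<lambda>l r. \<Sum>a<P. of_real (U3 a l) * Cs a r :: complex)"
  let ?res = "\<lambda>T M2 P G A B C. residual N (yvec y t0) (Hmat x t0) M1 T M2 P R1 R2 R3 G A B C"
  have "Inf {?res (compress T M2 P U2 U3) M2t Pt G A Bt Ct | G A Bt Ct. True}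
      \<le> ?res (compress T M2 P U2 U3) M2t Pt Gs As Bt Ct"
    by (rule cInf_lower) (auto intro!: bdd_belowI[where m=0] residual_nonneg)
  also have "\<dots> = ?res Tp M2 P Gs As Bs Cs"
    unfolding residual_def Bt_def Ct_def Tp_def contr23_compress_eq_project ..
  also have "\<dots> \<le> ?res T M2 P Gs As Bs Cs
      + L2_set (\<lambda>n. cmod (tucker_model (Hmat x t0) M1 (\<lambda>n j p. T n j p - Tp n j p) M2 P R1 R2 R3 Gs As Bs Cs n)) {..<N}"
    by (rule residual_le_residual_add)
  also have "\<dots> \<le> ?res T M2 P Gs As Bs Cs
      + frob3 N M2 P (\<lambda>n j p. T n j p - Tp n j p)
        * (\<Sum>r1<R1. \<Sum>r2<R2. \<Sum>r3<R3. cmod (Gs r1 r2 r3) * supnorm N (HA (Hmat x t0) M1 As r1)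
             * colnorm M2 Bs r2 * colnorm P Cs r3)"
    using L2_set_tucker_model_le[OF pos(1)] by (rule add_left_mono)
  finally show ?thesis unfolding T_def Tp_def .
qed

end
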